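(* Let $(\Omega,+)$ be a group, $a,b$ subgroups, and $x,y,z\subseteq\Omega$ with $x\top b$, $y\top b$, $z\top b$, $a\top x$, $a\top y$. Write $x=G_X$ and $z=G_Z$ as left graphs with respect to the decomposition $\Omega\cong y\times b$, i.e. $G_X=\{\eta+X(\eta):\eta\in y\}$, $G_Z=\{\eta+Z(\eta):\eta\in y\}$ with (unique) maps $X,Z:y\to b$. Then $\Gamma(G_X,a,y,b,G_Z)=G_{X+Z\circ\mathrm{B}^{a,x,b}_y}$, i.e. $\Gamma(x,a,y,b,z)$ is the left graph of the map $y\to b$, $\eta\mapsto X(\eta)+Z(\mathrm{B}^{a,x,b}_y(\eta))$.
   Context: $(\Omega,+)$ is a group written additively but not necessarily abelian. For subsets $u,v$, $u\top v$ means every $\omega$ has a unique decomposition $\omega=\mu+\nu$ with $\mu\in u,\nu\in v$; then $P^u_v(\omega):=\nu$ and $\check P^v_u(\omega):=\mu$. The canonical kernel is $\mathrm{B}^{a,x,b}_y:y\to y$, $\eta\mapsto P^a_y(\check P^b_x(\eta))$. $\Gamma(x,a,y,b,z)=\{\omega:\exists\alpha\in a,\beta\in b:\ \alpha+\omega+\beta\in y,\ \alpha+\omega\in z,\ \omega+\beta\in x\}$. *)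

theory Defs
  imports Main
begin

definition is_subgroup :: "'a::group_add set \<Rightarrow> bool" where
  "is_subgroup a \<longleftrightarrow> 0 \<in> a \<and> (\<forall>x\<in>a. \<forall>y\<in>a. x + y \<in> a) \<and> (\<forall>x\<in>a. - x \<in> a)"

definition transversal :: "'a::group_add set \<Rightarrow> 'a set \<Rightarrow> bool" (infix "\<top>" 50) where
  "u \<top> v \<longleftrightarrow> (\<forall>\<omega>. \<exists>!p. fst p \<in> u \<and> snd p \<in> v \<and> \<omega> = fst p + snd p)"

definition Proj :: "'a::group_add set \<Rightarrow> 'a set \<Rightarrow> 'a \<Rightarrow> 'a" where
  "Proj u v \<omega> = snd (THE p. fst p \<in> u \<and> snd p \<in> v \<and> \<omega> = fst p + snd p)"

text \<open>check P^v_u(omega) = mu (the u-component of the decomposition for u \<top> v).\<close>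
definition Projc :: "'a::group_add set \<Rightarrow> 'a set \<Rightarrow> 'a \<Rightarrow> 'a" where
  "Projc v u \<omega> = fst (THE p. fst p \<in> u \<and> snd p \<in> v \<and> \<omega> = fst p + snd p)"

definition Bker :: "'a::group_add set \<Rightarrow> 'a set \<Rightarrow> 'a set \<Rightarrow> 'a set \<Rightarrow> 'a \<Rightarrow> 'a" where
  "Bker a x b y \<eta> = Proj a y (Projc b x \<eta>)"

definition Gam :: "'a::group_add set \<Rightarrow> 'a set \<Rightarrow> 'a set \<Rightarrow> 'a set \<Rightarrow> 'a set \<Rightarrow> 'a set" where
  "Gam x a y b z = {\<omega>. \<exists>\<alpha>\<in>a. \<exists>\<beta>\<in>b. \<alpha> + \<omega> + \<beta> \<in> y \<and> \<alpha> + \<omega> \<in> z \<and> \<omega> + \<beta> \<in> x}"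

definition left_graph :: "'a::group_add set \<Rightarrow> ('a \<Rightarrow> 'a) \<Rightarrow> 'a set" where
  "left_graph y F = {\<eta> + F \<eta> | \<eta>. \<eta> \<in> y}"

end

theory Submission
  imports Defs
begin

text \<open>For \<open>\<omega> \<in> \<Gamma>\<close> with witnesses \<open>\<alpha>, \<beta>\<close>, write \<open>\<alpha> + \<omega> = \<zeta> + Z \<zeta>\<close> with \<open>\<zeta> \<in> y\<close>.
  Then \<open>\<zeta> + (Z \<zeta> + \<beta>) \<in> y\<close>, and uniqueness of decompositions for \<open>y \<top> b\<close> forces
  \<open>\<beta> = - Z \<zeta>\<close>. Writing \<open>\<omega> + \<beta> = \<eta> + X \<eta>\<close> with \<open>\<eta> \<in> y\<close> gives \<open>\<eta> + X \<eta> = - \<alpha> + \<zeta>\<close>;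
  as \<open>\<eta> + X \<eta>\<close> is the \<open>x\<close>-component of \<open>\<eta>\<close>, its \<open>y\<close>-component \<open>\<zeta>\<close> is the kernel
  value \<open>B \<eta>\<close>, and \<open>\<omega> = \<eta> + X \<eta> + Z (B \<eta>)\<close>. Reading these equations backwards
  shows the converse inclusion.\<close>

lemma is_subgroup_zero: "is_subgroup a \<Longrightarrow> 0 \<in> a"
  and is_subgroup_add: "is_subgroup a \<Longrightarrow> u \<in> a \<Longrightarrow> v \<in> a \<Longrightarrow> u + v \<in> a"
  and is_subgroup_uminus: "is_subgroup a \<Longrightarrow> u \<in> a \<Longrightarrow> - u \<in> a"
  unfolding is_subgroup_def by auto

lemma transversal_unique:
  assumes "u \<top> v" "m \<in> u" "n \<in> v" "m' \<in> u" "n' \<in> v" "m + n = m' + n'"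
  shows "m = m'" and "n = n'"
proof -
  from assms(1) have "\<exists>!p. fst p \<in> u \<and> snd p \<in> v \<and> m + n = fst p + snd p"
    unfolding transversal_def by blast
  then have "(m, n) = (m', n')" using assms by (metis fst_conv snd_conv)
  then show "m = m'" and "n = n'" by simp_all
qed

lemma transversal_decomp:
  assumes "u \<top> v"
  obtains m n where "m \<in> u" "n \<in> v" "\<omega> = m + n"
  using assms unfolding transversal_def by blast

lemma transversal_the_pair:
  assumes "u \<top> v" "m \<in> u" "n \<in> v"
  shows "(THE p. fst p \<in> u \<and> snd p \<in> v \<and> m + n = fst p + snd p) = (m, n)"
proof (rule the_equality)
  fix p assume "fst p \<in> u \<and> snd p \<in> v \<and> m + n = fst p + snd p"
  then show "p = (m, n)"
    using transversal_unique[OF assms, of "fst p" "snd p"] by (metis prod.collapse)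
qed (use assms in simp)

lemma Proj_add: "u \<top> v \<Longrightarrow> m \<in> u \<Longrightarrow> n \<in> v \<Longrightarrow> Proj u v (m + n) = n"
  unfolding Proj_def by (simp add: transversal_the_pair)

lemma Projc_add: "u \<top> v \<Longrightarrow> m \<in> u \<Longrightarrow> n \<in> v \<Longrightarrow> Projc v u (m + n) = m"
  unfolding Projc_def by (simp add: transversal_the_pair)

lemma left_graph_memI: "\<eta> \<in> y \<Longrightarrow> \<omega> = \<eta> + F \<eta> \<Longrightarrow> \<omega> \<in> left_graph y F"
  unfolding left_graph_def by blast

lemma left_graph_memE:
  assumes "\<omega> \<in> left_graph y F"
  obtains \<eta> where "\<eta> \<in> y" "\<omega> = \<eta> + F \<eta>"
  using assms unfolding left_graph_def by blast

lemma Projc_left_graph: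
  assumes "is_subgroup b" "left_graph y X \<top> b" "\<forall>\<eta>\<in>y. X \<eta> \<in> b" "\<eta> \<in> y"
  shows "Projc b (left_graph y X) \<eta> = \<eta> + X \<eta>"
proof -
  have "\<eta> + X \<eta> \<in> left_graph y X" using \<open>\<eta> \<in> y\<close> by (rule left_graph_memI) simp
  moreover have "- X \<eta> \<in> b" using assms(1,3,4) by (simp add: is_subgroup_uminus)
  ultimately have "Projc b (left_graph y X) ((\<eta> + X \<eta>) + - X \<eta>) = \<eta> + X \<eta>"
    using assms(2) by (intro Projc_add)
  then show ?thesis by (simp add: add.assoc)
qed

lemma Bker_left_graph:
  assumes "is_subgroup b" "left_graph y X \<top> b" "a \<top> y" "\<forall>\<eta>\<in>y. X \<eta> \<in> b"
    and "\<eta> \<in> y" "\<alpha> \<in> a" "\<zeta> \<in> y" "\<eta> + X \<eta> = \<alpha> + \<zeta>"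
  shows "Bker a (left_graph y X) b y \<eta> = \<zeta>"
proof -
  have "Bker a (left_graph y X) b y \<eta> = Proj a y (\<eta> + X \<eta>)"
    unfolding Bker_def using assms(1,2,4,5) by (simp only: Projc_left_graph)
  also have "\<dots> = \<zeta>" unfolding \<open>\<eta> + X \<eta> = \<alpha> + \<zeta>\<close> using assms(3,6,7) by (rule Proj_add)
  finally show ?thesis .
qed

lemma left_graph_add_mem_imp_eq_uminus:
  assumes "is_subgroup b" "y \<top> b" "\<forall>\<eta>\<in>y. Z \<eta> \<in> b"
    and "\<zeta> \<in> y" "\<beta> \<in> b" "\<zeta> + Z \<zeta> + \<beta> \<in> y"
  shows "\<beta> = - Z \<zeta>"
proof -
  have "Z \<zeta> + \<beta> \<in> b" using assms(1,3,4,5) by (simp add: is_subgroup_add)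
  moreover have "\<zeta> + (Z \<zeta> + \<beta>) = (\<zeta> + Z \<zeta> + \<beta>) + 0" by (simp add: add.assoc)
  ultimately have "Z \<zeta> + \<beta> = 0"
    using assms(1,2,4,6) is_subgroup_zero by (metis transversal_unique(2))
  then show ?thesis by (simp add: add_eq_0_iff)
qed

lemma Gam_subset_left_graph:
  assumes "is_subgroup a" "is_subgroup b" "x \<top> b" "y \<top> b" "a \<top> y"
    and X: "\<forall>\<eta>\<in>y. X \<eta> \<in> b" and Z: "\<forall>\<eta>\<in>y. Z \<eta> \<in> b"
    and x: "x = left_graph y X" and z: "z = left_graph y Z"
  shows "Gam x a y b z \<subseteq> left_graph y (\<lambda>\<eta>. X \<eta> + Z (Bker a x b y \<eta>))"
proof
  fix \<omega> assume "\<omega> \<in> Gam x a y b z"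
  then obtain \<alpha> \<beta> where "\<alpha> \<in> a" "\<beta> \<in> b" and in_y: "\<alpha> + \<omega> + \<beta> \<in> y"
    and in_z: "\<alpha> + \<omega> \<in> z" and in_x: "\<omega> + \<beta> \<in> x" unfolding Gam_def by blast
  from in_z obtain \<zeta> where "\<zeta> \<in> y" and \<zeta>: "\<alpha> + \<omega> = \<zeta> + Z \<zeta>"
    unfolding z by (rule left_graph_memE)
  have \<beta>: "\<beta> = - Z \<zeta>"
    using left_graph_add_mem_imp_eq_uminus[OF assms(2,4) Z \<open>\<zeta> \<in> y\<close> \<open>\<beta> \<in> b\<close>] in_y \<zeta> by simp
  from in_x obtain \<eta> where "\<eta> \<in> y" and \<eta>: "\<omega> + \<beta> = \<eta> + X \<eta>"
    unfolding x by (rule left_graph_memE)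
  have "\<eta> + X \<eta> = - \<alpha> + (\<alpha> + \<omega> + \<beta>)" using \<eta> by (simp add: add.assoc)
  also have "\<dots> = - \<alpha> + \<zeta>" using \<zeta> \<beta> by (simp add: add.assoc)
  finally have "\<eta> + X \<eta> = - \<alpha> + \<zeta>" .
  moreover have "- \<alpha> \<in> a" using assms(1) \<open>\<alpha> \<in> a\<close> by (rule is_subgroup_uminus)
  ultimately have B: "Bker a x b y \<eta> = \<zeta>"
    using assms(2,3,5) X \<open>\<eta> \<in> y\<close> \<open>\<zeta> \<in> y\<close> unfolding x by (intro Bker_left_graph)
  have "\<omega> = (\<omega> + \<beta>) + Z \<zeta>" using \<beta> by (simp add: add.assoc)
  then have "\<omega> = \<eta> + (X \<eta> + Z \<zeta>)" using \<eta> by (simp add: add.assoc)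
  then show "\<omega> \<in> left_graph y (\<lambda>\<eta>. X \<eta> + Z (Bker a x b y \<eta>))"
    using B \<open>\<eta> \<in> y\<close> by (intro left_graph_memI) auto
qed

lemma left_graph_subset_Gam:
  assumes "is_subgroup a" "is_subgroup b" "x \<top> b" "a \<top> y"
    and X: "\<forall>\<eta>\<in>y. X \<eta> \<in> b" and Z: "\<forall>\<eta>\<in>y. Z \<eta> \<in> b"
    and x: "x = left_graph y X" and z: "z = left_graph y Z"
  shows "left_graph y (\<lambda>\<eta>. X \<eta> + Z (Bker a x b y \<eta>)) \<subseteq> Gam x a y b z"
proof
  fix \<omega> assume "\<omega> \<in> left_graph y (\<lambda>\<eta>. X \<eta> + Z (Bker a x b y \<eta>))"
  then obtain \<eta> where "\<eta> \<in> y" and \<omega>: "\<omega> = \<eta> + (X \<eta> + Z (Bker a x b y \<eta>))"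
    by (rule left_graph_memE)
  obtain \<alpha> \<zeta> where "\<alpha> \<in> a" "\<zeta> \<in> y" and \<alpha>\<zeta>: "\<eta> + X \<eta> = \<alpha> + \<zeta>"
    using \<open>a \<top> y\<close> by (rule transversal_decomp)
  have "Bker a x b y \<eta> = \<zeta>"
    using assms(2-5) \<open>\<eta> \<in> y\<close> \<open>\<zeta> \<in> y\<close> \<open>\<alpha> \<in> a\<close> \<alpha>\<zeta> unfolding x by (intro Bker_left_graph) auto
  then have \<omega>': "\<omega> = \<alpha> + \<zeta> + Z \<zeta>" using \<omega> \<alpha>\<zeta> by (simp add: add.assoc[symmetric])
  have \<omega>_minus: "\<omega> + - Z \<zeta> = \<eta> + X \<eta>" using \<omega>' \<alpha>\<zeta> by (simp add: add.assoc[symmetric])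
  have "- \<alpha> \<in> a" using assms(1) \<open>\<alpha> \<in> a\<close> by (rule is_subgroup_uminus)
  moreover have "- Z \<zeta> \<in> b" using assms(2) Z \<open>\<zeta> \<in> y\<close> by (simp add: is_subgroup_uminus)
  moreover have "- \<alpha> + \<omega> + - Z \<zeta> \<in> y" using \<omega>' \<open>\<zeta> \<in> y\<close> by (simp add: add.assoc)
  moreover have "- \<alpha> + \<omega> \<in> z"
    unfolding z using \<omega>' \<open>\<zeta> \<in> y\<close> by (intro left_graph_memI) (simp_all add: add.assoc)
  moreover have "\<omega> + - Z \<zeta> \<in> x"
    unfolding x using \<open>\<eta> \<in> y\<close> \<omega>_minus by (rule left_graph_memI)
  ultimately show "\<omega> \<in> Gam x a y b z" unfolding Gam_def by blast
qed

theorem theorem8p1: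
  fixes a b x y z :: "'a::group_add set" and X Z :: "'a \<Rightarrow> 'a"
  assumes "is_subgroup a" and "is_subgroup b"
    and "x \<top> b" and "y \<top> b" and "z \<top> b" and "a \<top> x" and "a \<top> y"
    and "\<forall>\<eta>\<in>y. X \<eta> \<in> b" and "\<forall>\<eta>\<in>y. Z \<eta> \<in> b"
    and "x = left_graph y X" and "z = left_graph y Z"
  shows "Gam x a y b z = left_graph y (\<lambda>\<eta>. X \<eta> + Z (Bker a x b y \<eta>))"
proof
  show "Gam x a y b z \<subseteq> left_graph y (\<lambda>\<eta>. X \<eta> + Z (Bker a x b y \<eta>))"
    using assms(1-4,7-11) by (rule Gam_subset_left_graph)
  show "left_graph y (\<lambda>\<eta>. X \<eta> + Z (Bker a x b y \<eta>)) \<subseteq> Gam x a y b z"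
    using assms(1-3,7-11) by (rule left_graph_subset_Gam)
qed

end
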